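(* Let $\rho:\mathbb Z^s\to GL(k,\mathbb Z)$ be a special homomorphism and let $f_1,f_2:G_{s,k}(\rho)\to\mathbb Z^s$ be epimorphisms. Then there is an isomorphism $\psi:\mathbb Z^s\to\mathbb Z^s$ such that $f_2=\psi\circ f_1$.
   Context: $G_{s,k}(\rho)$ is the semidirect product $\mathbb Z^s\ltimes\mathbb Z^k$ with multiplication $(g,v)(h,w)=(g+h,v+\rho(g)w)$. $\rho$ is special if there is $g\in\mathbb Z^s$ such that $1$ is not an eigenvalue of $\rho(g)$. *)

theory Defs
  imports "HOL-Analysis.Analysis" "HOL-Algebra.Algebra"
begin

text \<open>The additive group Z^s, realised as int^'s (dimension s = CARD('s)).\<close>
definition Zgrp :: "('n::finite) itself \<Rightarrow> (int^'n) monoid" where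
  "Zgrp _ = \<lparr>carrier = UNIV, mult = (+), one = 0\<rparr>"

definition GL_rep :: "(int^'s \<Rightarrow> int^'k^'k) \<Rightarrow> bool" where
  "GL_rep \<rho> \<longleftrightarrow> (\<forall>g. invertible (\<rho> g)) \<and> \<rho> 0 = mat 1
      \<and> (\<forall>g h. \<rho> (g + h) = \<rho> g ** \<rho> h)"

definition is_eigenvalue :: "'a::field^'k^'k \<Rightarrow> 'a \<Rightarrow> bool" where
  "is_eigenvalue A c \<longleftrightarrow> (\<exists>v. v \<noteq> 0 \<and> A *v v = c *s v)"

definition cmat :: "int^'k^'m \<Rightarrow> complex^'k^'m" where
  "cmat A = (\<chi> i j. of_int (A $ i $ j))"

definition special :: "(int^'s \<Rightarrow> int^'k^'k) \<Rightarrow> bool" where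
  "special \<rho> \<longleftrightarrow> (\<exists>g. \<not> is_eigenvalue (cmat (\<rho> g)) 1)"

definition Gsk :: "(int^'s \<Rightarrow> int^'k^'k) \<Rightarrow> ((int^'s) \<times> (int^'k)) monoid" where
  "Gsk \<rho> = \<lparr>carrier = UNIV,
              mult = (\<lambda>x y. (fst x + fst y, snd x + (\<rho> (fst x) *v snd y))),
              one = (0, 0)\<rparr>"

end

theory Submission
  imports Defs
begin

text \<open>A homomorphism f from G_{s,k}(rho) to a free abelian group satisfies f(0, rho(g) v) = f(0, v),
  because (0, rho(g) v) is the conjugate of (0, v) by (g, 0). Hence f vanishes on the image of
  rho(g) - 1, which for the g witnessing that rho is special has finite index in Z^k: since
  rho(g) - 1 is invertible over Q, clearing denominators puts a nonzero multiple of every vector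
  into it. As Z^s is torsion-free, f kills Z^k and so factors through the projection onto Z^s.
  The theorem then follows because Z^s is Hopfian: a surjective endomorphism of Z^s stays
  surjective over Q^s, hence is injective there, hence on Z^s.\<close>

definition map_vector :: "('a \<Rightarrow> 'b) \<Rightarrow> 'a^'n \<Rightarrow> 'b^'n" where
  "map_vector f v = (\<chi> i. f (v $ i))"

lemma map_vector_nth [simp]: "map_vector f v $ i = f (v $ i)"
  by (simp add: map_vector_def)

lemma map_vector_of_int_mult:
  "map_vector (of_int :: int \<Rightarrow> 'a::comm_ring_1) (A *v v) = map_matrix of_int A *v map_vector of_int v"
  by (simp add: vec_eq_iff matrix_vector_mult_def)

lemma map_vector_of_rat_mult:
  "map_vector (of_rat :: rat \<Rightarrow> 'a::field_char_0) (A *v v) = map_matrix of_rat A *v map_vector of_rat v"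
  by (simp add: vec_eq_iff matrix_vector_mult_def of_rat_sum of_rat_mult)

lemma map_vector_of_int_smult: "map_vector of_int (c *s v) = of_int c *s map_vector of_int v"
  by (simp add: vec_eq_iff)

lemma map_vector_of_int_eq_iff [simp]:
  "map_vector (of_int :: int \<Rightarrow> 'a::ring_char_0) x = map_vector of_int y \<longleftrightarrow> x = y"
  by (simp add: vec_eq_iff)

lemma cmat_eq_map_matrix: "cmat A = map_matrix of_rat (map_matrix of_int A)"
  by (simp add: cmat_def vec_eq_iff)

lemma rat_vector_integral_multiple:
  fixes x :: "rat^'n"
  shows "\<exists>D y. D > 0 \<and> map_vector of_int y = of_int D *s x"
proof -
  define q where "q j = quotient_of (x $ j)" for j
  define D where "D = (\<Prod>j\<in>UNIV. snd (q j))"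
  have pos: "snd (q j) > 0" for j
    unfolding q_def using quotient_of_denom_pos' by blast
  have "snd (q j) dvd D" for j
    unfolding D_def by (rule dvd_prodI) auto
  define c where "c j = D div snd (q j)" for j
  have c: "D = snd (q j) * c j" for j
    unfolding c_def using \<open>snd (q j) dvd D\<close> by simp
  define y where "y = (\<chi> j. fst (q j) * c j)"
  have "of_int (fst (q j) * c j) = of_int D * x $ j" for j
  proof -
    have "x $ j = of_int (fst (q j)) / of_int (snd (q j))"
      unfolding q_def by (simp add: quotient_of_div surjective_pairing)
    then show ?thesis
      using pos[of j] by (simp add: c[of j] field_simps)
  qed
  then have "map_vector of_int y = of_int D *s x"
    by (simp add: vec_eq_iff y_def)
  moreover have "D > 0"
    unfolding D_def using pos by (simp add: prod_pos)
  ultimately show ?thesis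
    by blast
qed

lemma int_matrix_surj_imp_rat_surj:
  fixes A :: "int^'m^'n"
  assumes "surj ((*v) A)"
  shows "surj ((*v) (map_matrix of_int A :: rat^'m^'n))"
  unfolding surj_def
proof
  fix x :: "rat^'n"
  obtain D y where "D > 0" and y: "map_vector of_int y = of_int D *s x"
    using rat_vector_integral_multiple by blast
  obtain z where "y = A *v z"
    using assms by (metis surjD)
  then have "map_matrix of_int A *v map_vector of_int z = of_int D *s x"
    using y by (simp add: map_vector_of_int_mult)
  with \<open>D > 0\<close> have "map_matrix of_int A *v ((1 / of_int D) *s map_vector of_int z) = x"
    by (simp add: vec.scale)
  then show "\<exists>z. x = map_matrix of_int A *v z"
    by metis
qed

lemma int_matrix_surj_imp_inj:
  fixes A :: "int^'n^'n"
  assumes "surj ((*v) A)"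
  shows "inj ((*v) A)"
proof (rule injI)
  fix x y
  assume "A *v x = A *v y"
  then have "map_matrix of_int A *v map_vector of_int x
      = (map_matrix of_int A *v map_vector of_int y :: rat^'n)"
    by (metis map_vector_of_int_mult)
  moreover have "inj ((*v) (map_matrix of_int A :: rat^'n^'n))"
    using vec.linear_surj_imp_inj[OF matrix_vector_mul_linear_gen]
      int_matrix_surj_imp_rat_surj[OF assms] .
  ultimately show "x = y"
    by (simp add: inj_eq)
qed

lemma int_matrix_multiple_in_range:
  fixes A :: "int^'n^'n"
  assumes "inj ((*v) (map_matrix of_int A :: rat^'n^'n))"
  shows "\<exists>D y. D \<noteq> 0 \<and> A *v y = D *s v"
proof -
  have "surj ((*v) (map_matrix of_int A :: rat^'n^'n))"
    using vec.linear_inj_imp_surj[OF matrix_vector_mul_linear_gen assms] .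
  then obtain x :: "rat^'n" where x: "map_matrix of_int A *v x = map_vector of_int v"
    by (metis surjD)
  obtain D y where "D > 0" and y: "map_vector of_int y = of_int D *s x"
    using rat_vector_integral_multiple by blast
  have "map_vector of_int (A *v y) = (map_vector of_int (D *s v) :: rat^'n)"
    using x y by (simp add: map_vector_of_int_mult map_vector_of_int_smult vec.scale)
  then have "A *v y = D *s v"
    by simp
  with \<open>D > 0\<close> show ?thesis
    by (metis less_irrefl)
qed

lemma not_eigenvalue_one_imp_inj:
  fixes R :: "int^'n^'n"
  assumes "\<not> is_eigenvalue (cmat R) 1"
  shows "inj ((*v) (map_matrix of_int (R - mat 1) :: rat^'n^'n))"
  unfolding vec.inj_iff_eq_0
proof (intro allI impI)
  fix x :: "rat^'n"
  assume "map_matrix of_int (R - mat 1) *v x = 0"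
  moreover have "map_matrix of_int (R - mat 1) = map_matrix of_int R - (mat 1 :: rat^'n^'n)"
    by (simp add: vec_eq_iff mat_def)
  ultimately have "map_matrix of_int R *v x = x"
    by (simp add: matrix_vector_mult_diff_rdistrib)
  then have "cmat R *v map_vector of_rat x = 1 *s map_vector of_rat x"
    by (simp add: cmat_eq_map_matrix flip: map_vector_of_rat_mult)
  with assms have "map_vector (of_rat :: rat \<Rightarrow> complex) x = 0"
    unfolding is_eigenvalue_def by blast
  then show "x = 0"
    by (simp add: vec_eq_iff)
qed

lemma additive_int_vector_smult:
  fixes h :: "int^'a \<Rightarrow> int^'b"
  assumes "Modules.additive h"
  shows "h (c *s x) = c *s h x"
proof (induction c rule: int_induct[where k = 0])
  case base
  then show ?case
    using additive.zero[OF assms] by simp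
next
  case (step1 i)
  then show ?case
    using additive.add[OF assms, of "i *s x" x] by simp
next
  case (step2 i)
  then show ?case
    using additive.diff[OF assms, of "i *s x" x] by simp
qed

lemma additive_int_vector_eq_matrix:
  fixes h :: "int^'a \<Rightarrow> int^'b"
  assumes "Modules.additive h"
  shows "h = (*v) (\<chi> i j. h (axis j 1) $ i)"
proof
  fix x
  have "h x = h (\<Sum>j\<in>UNIV. x $ j *s axis j 1)"
    by (simp add: basis_expansion)
  also have "\<dots> = (\<Sum>j\<in>UNIV. x $ j *s h (axis j 1))"
    by (simp add: additive.sum[OF assms] additive_int_vector_smult[OF assms])
  also have "\<dots> = (\<chi> i j. h (axis j 1) $ i) *v x"
    by (simp add: vec_eq_iff matrix_vector_mult_def mult.commute)
  finally show "h x = (\<chi> i j. h (axis j 1) $ i) *v x" .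
qed

lemma surj_additive_int_vector_imp_inj:
  fixes h :: "int^'n \<Rightarrow> int^'n"
  assumes "Modules.additive h" and "surj h"
  shows "inj h"
  using assms int_matrix_surj_imp_inj additive_int_vector_eq_matrix by metis

lemma additive_invariant_vanishes:
  fixes h :: "int^'k \<Rightarrow> int^'t" and R :: "int^'k^'k"
  assumes "Modules.additive h" and invariant: "\<And>v. h (R *v v) = h v"
    and "\<not> is_eigenvalue (cmat R) 1"
  shows "h v = 0"
proof -
  obtain D y where "D \<noteq> 0" and y: "(R - mat 1) *v y = D *s v"
    using int_matrix_multiple_in_range not_eigenvalue_one_imp_inj assms(3) by blast
  have "D *s h v = h ((R - mat 1) *v y)"
    by (simp add: y additive_int_vector_smult[OF assms(1)])
  also have "\<dots> = 0"
    by (simp add: matrix_vector_mult_diff_rdistrib additive.diff[OF assms(1)] invariant)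
  finally show ?thesis
    using \<open>D \<noteq> 0\<close> by (simp add: vec_eq_iff)
qed

lemma hom_Gsk_factors_through_fst:
  fixes \<rho> :: "int^'s \<Rightarrow> int^'k^'k" and f :: "(int^'s) \<times> (int^'k) \<Rightarrow> int^'t"
  assumes "GL_rep \<rho>" and "special \<rho>" and "f \<in> hom (Gsk \<rho>) (Zgrp TYPE('t))"
  shows "\<exists>\<phi>. Modules.additive \<phi> \<and> f = \<phi> \<circ> fst"
proof -
  have f_mult: "f (g, v) + f (h, w) = f (g + h, v + \<rho> g *v w)" for g v h w
    using hom_mult[OF assms(3), of "(g, v)" "(h, w)"] by (simp add: Gsk_def Zgrp_def)
  have \<rho>0: "\<rho> 0 = mat 1"
    using assms(1) by (simp add: GL_rep_def)
  have decompose: "f (g, v) = f (0, v) + f (g, 0)" for g v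
    using f_mult[of 0 v g 0] by (simp add: \<rho>0)
  have "Modules.additive (\<lambda>v. f (0, v))"
    by unfold_locales (use f_mult[of 0 _ 0] in \<open>simp add: \<rho>0\<close>)
  moreover have "f (0, \<rho> g *v v) = f (0, v)" for g v
    \<comment> \<open>(g, 0) (0, v) = (0, \<rho> g v) (g, 0)\<close>
    using f_mult[of g 0 0 v] decompose[of g "\<rho> g *v v"] by (simp add: add.commute)
  moreover obtain g0 where "\<not> is_eigenvalue (cmat (\<rho> g0)) 1"
    using assms(2) special_def by blast
  ultimately have "f (0, v) = 0" for v
    by (rule additive_invariant_vanishes)
  then have "f x = f (fst x, 0)" for x
    using decompose[of "fst x" "snd x"] by simp
  then have "f = (\<lambda>g. f (g, 0)) \<circ> fst"
    unfolding fun_eq_iff comp_def by blast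
  moreover have "Modules.additive (\<lambda>g. f (g, 0))"
    by unfold_locales (use f_mult[of _ 0 _ 0] in simp)
  ultimately show ?thesis
    by blast
qed

lemma group_Zgrp: "group (Zgrp TYPE('n::finite))"
  by (rule groupI) (auto simp: Zgrp_def add.assoc intro: exI[of _ "- _"])

lemma surj_additive_iso_Zgrp:
  fixes h :: "int^'n::finite \<Rightarrow> int^'n"
  assumes "Modules.additive h" and "surj h"
  shows "h \<in> iso (Zgrp TYPE('n)) (Zgrp TYPE('n))"
  using assms surj_additive_int_vector_imp_inj[OF assms]
  by (auto simp: iso_def hom_def Zgrp_def bij_def Modules.additive_def)

theorem lemma6p8:
  fixes \<rho> :: "int^'s \<Rightarrow> int^'k^'k"
    and f1 f2 :: "(int^'s) \<times> (int^'k) \<Rightarrow> int^'s"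
  assumes "GL_rep \<rho>" and "special \<rho>"
    and "f1 \<in> hom (Gsk \<rho>) (Zgrp TYPE('s))" and "f1 ` carrier (Gsk \<rho>) = carrier (Zgrp TYPE('s))"
    and "f2 \<in> hom (Gsk \<rho>) (Zgrp TYPE('s))" and "f2 ` carrier (Gsk \<rho>) = carrier (Zgrp TYPE('s))"
  shows "\<exists>\<psi>. \<psi> \<in> iso (Zgrp TYPE('s)) (Zgrp TYPE('s)) \<and> f2 = \<psi> \<circ> f1"
proof -
  obtain \<phi>1 where \<phi>1: "Modules.additive \<phi>1" "f1 = \<phi>1 \<circ> fst"
    using hom_Gsk_factors_through_fst[OF assms(1-3)] by blast
  obtain \<phi>2 where \<phi>2: "Modules.additive \<phi>2" "f2 = \<phi>2 \<circ> fst"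
    using hom_Gsk_factors_through_fst[OF assms(1,2,5)] by blast
  have surj: "surj \<phi>1" "surj \<phi>2"
    using assms(4,6) unfolding \<phi>1(2) \<phi>2(2) image_comp[symmetric]
    by (simp_all add: Gsk_def Zgrp_def)
  then have iso1: "\<phi>1 \<in> iso (Zgrp TYPE('s)) (Zgrp TYPE('s))"
    and iso2: "\<phi>2 \<in> iso (Zgrp TYPE('s)) (Zgrp TYPE('s))"
    using \<phi>1(1) \<phi>2(1) by (simp_all add: surj_additive_iso_Zgrp)
  define \<psi> where "\<psi> = \<phi>2 \<circ> inv_into UNIV \<phi>1"
  have "\<psi> \<in> iso (Zgrp TYPE('s)) (Zgrp TYPE('s))"
    using iso_set_trans[OF group.iso_set_sym[OF group_Zgrp iso1] iso2]
    by (simp add: \<psi>_def Zgrp_def)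
  moreover have "f2 = \<psi> \<circ> f1"
    using surj_additive_int_vector_imp_inj[OF \<phi>1(1) surj(1)]
    by (simp add: \<psi>_def \<phi>1(2) \<phi>2(2) fun_eq_iff inv_f_f)
  ultimately show ?thesis
    by blast
qed

end
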